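(* Let $P:\mathcal V\to\{\mathtt{true},\mathtt{false}\}$ and $PA:\mathcal A\to\{\mathtt{true},\mathtt{false}\}$ be labelings, $c$ a command, and $\rho_1,\rho_2,\mu_1,\mu_2$ scalar and array states. Assume: (1) $\mathtt b\notin\mathrm{UsedVars}(c)$ and $\rho_1(\mathtt b)=\rho_2(\mathtt b)=0$; (2) $|a|_{\mu_1}>0$ and $|a|_{\mu_2}>0$ for every array $a$; (3) $P;PA\vdash_{\mathtt{true}} c$ (IFC well-typed), $\rho_1\sim_P\rho_2$ and $\mu_1\sim_{PA}\mu_2$; (4) $\langle c,\rho_1,\mu_1\rangle\approx\langle c,\rho_2,\mu_2\rangle$. Then $\langle \mathrm{FiSLH}_P(c),\rho_1,\mu_1,\mathtt{false}\rangle\approx_s\langle \mathrm{FiSLH}_P(c),\rho_2,\mu_2,\mathtt{false}\rangle$.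
   Context: Language AWhile: scalar variables $X\in\mathcal V$, array names $a\in\mathcal A$. Arithmetic expressions $e::=n\ (n\in\mathbb N)\mid X\mid \mathrm{op}_{\mathbb N}(e,\dots,e)\mid be\,?\,e_1:e_2$; boolean expressions $be::=\mathtt{true}\mid\mathtt{false}\mid\mathrm{cmp}(e,e)\mid\mathrm{op}_{\mathbb B}(be,\dots,be)$; commands $c::=\mathtt{skip}\mid X:=e\mid c_1;c_2\mid \mathtt{if}\ be\ \mathtt{then}\ c_1\ \mathtt{else}\ c_2\mid\mathtt{while}\ be\ \mathtt{do}\ c\mid X\leftarrow a[e]\mid a[e]\leftarrow e'$. A scalar state is $\rho:\mathcal V\to\mathbb N$; an array state $\mu$ gives each array $a$ a size $|a|_\mu$ and values $\mu(a)[i]$ for $0\le i<|a|_\mu$. $[\![e]\!]_\rho,[\![be]\!]_\rho$ denote the usual pure evaluation (the conditional expression produces no observation). $\rho[X\mapsto v]$, $\mu[a[i]\mapsto v]$ are updates. $\mathrm{UsedVars}(c)$ is the set of scalar variables occurring in $c$. A distinguished scalar variable $\mathtt b$ is reserved as misspeculation flag. Sequential semantics: steps $\langle c,\rho,\mu\rangle\xrightarrow{o}\langle c',\rho',\mu'\rangle$, $o$ an observation $\mathrm{branch}(v)$, $\mathrm{read}(a,i)$, $\mathrm{write}(a,i)$, or none. Rules: $X:=e\to\mathtt{skip}$ with $\rho[X\mapsto[\![e]\!]_\rho]$, no obs; if $c_1\xrightarrow{o}c_1'$ then $c_1;c_2\xrightarrow{o}c_1';c_2$; $\mathtt{skip};c\to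 c$, no obs; $\mathtt{if}\ be\ \mathtt{then}\ c_{\mathtt{true}}\ \mathtt{else}\ c_{\mathtt{false}}\to c_{v}$ with $v=[\![be]\!]_\rho$, obs $\mathrm{branch}(v)$; $\mathtt{while}\ be\ \mathtt{do}\ c\to\mathtt{if}\ be\ \mathtt{then}\ (c;\mathtt{while}\ be\ \mathtt{do}\ c)\ \mathtt{else}\ \mathtt{skip}$, no obs; $X\leftarrow a[ie]\to\mathtt{skip}$ with $\rho[X\mapsto\mu(a)[i]]$, obs $\mathrm{read}(a,i)$, where $i=[\![ie]\!]_\rho<|a|_\mu$; $a[ie]\leftarrow e\to\mathtt{skip}$ with $\mu[a[i]\mapsto[\![e]\!]_\rho]$, obs $\mathrm{write}(a,i)$, where $i=[\![ie]\!]_\rho<|a|_\mu$. $\xrightarrow{O}{}^*$ is the reflexive-transitive closure, $O$ the list of produced observations. Speculative semantics: configurations $\langle c,\rho,\mu,\beta\rangle$ with boolean misspeculation flag $\beta$; steps $\xrightarrow[d]{o}$ with optional directive $d\in\{\mathit{step},\mathit{force},\mathrm{load}(a',j),\mathrm{store}(a',j)\}$. Assignment, sequence, skip and while rules are as sequentially, keep $\beta$ and use no directive. Conditional: with $\mathit{step}$ go to $c_v$, $v=[\![be]\!]_\rho$, flag unchanged, obs $\mathrm{branch}(v)$; with $\mathit{force}$ go to $c_{\neg v}$, flag set to $\mathtt{true}$, obs $\mathrm{branch}(v)$. Read/write with $\mathit{step}$: as sequentially (requires $i<|a|_\mu$), flag unchanged. Read with $\mathrm{load}(a',j)$: only if $\beta=\mathtt{true}$,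 $i=[\![ie]\!]_\rho\ge|a|_\mu$, $j<|a'|_\mu$; sets $X$ to $\mu(a')[j]$, obs $\mathrm{read}(a,i)$. Write with $\mathrm{store}(a',j)$: only if $\beta=\mathtt{true}$, $i\ge|a|_\mu$, $j<|a'|_\mu$; sets $\mu[a'[j]\mapsto[\![e]\!]_\rho]$, obs $\mathrm{write}(a,i)$. Multi-step $\xrightarrow[D]{O}{}^*$ with $D$ the list of directives. Observational equivalences: $\langle c_1,\rho_1,\mu_1\rangle\approx\langle c_2,\rho_2,\mu_2\rangle$ iff for all $O_1,O_2$ such that $\langle c_k,\rho_k,\mu_k\rangle\xrightarrow{O_k}{}^*$ some configuration ($k=1,2$), one of $O_1,O_2$ is a prefix of the other. $\langle c_1,\rho_1,\mu_1,\beta_1\rangle\approx_s\langle c_2,\rho_2,\mu_2,\beta_2\rangle$ iff for all $D,O_1,O_2$, if $\langle c_k,\rho_k,\mu_k,\beta_k\rangle\xrightarrow[D]{O_k}{}^*$ some configuration ($k=1,2$) then $O_1=O_2$. Labels: booleans, $\mathtt{true}$=public, $\mathtt{false}$=secret; $\ell_1\sqsubseteq\ell_2$ iff $\ell_2=\mathtt{true}\Rightarrow\ell_1=\mathtt{true}$; $\ell_1\sqcup\ell_2=\ell_1\wedge\ell_2$. For $P:\mathcal V\to$ labels, $P(e)$ and $P(be)$ are public iff every scalar variable occurring in the expression is public. $\rho_1\sim_P\rho_2$ iff $\rho_1(X)=\rho_2(X)$ whenever $P(X)=\mathtt{true}$; $\mu_1\sim_{PA}\mu_2$ iff for all $a$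 with $PA(a)=\mathtt{true}$, $|a|_{\mu_1}=|a|_{\mu_2}$ and contents agree. IFC typing $P;PA\vdash_{pc}c$: $\mathtt{skip}$ always; $X:=e$ if $pc\sqcup P(e)\sqsubseteq P(X)$; $c_1;c_2$ if both typed under $pc$; $\mathtt{if}\ be\ \mathtt{then}\ c_1\ \mathtt{else}\ c_2$ if $c_1,c_2$ typed under $pc\sqcup P(be)$; $\mathtt{while}\ be\ \mathtt{do}\ c$ if $c$ typed under $pc\sqcup P(be)$; $X\leftarrow a[i]$ if $pc\sqcup P(i)\sqcup PA(a)\sqsubseteq P(X)$; $a[i]\leftarrow e$ if $pc\sqcup P(i)\sqcup P(e)\sqsubseteq PA(a)$. Index-SLH recipe with parameters $B(be)$, $R(X,i)$, $W(i,e)$: $[\![\mathtt{skip}]\!]=\mathtt{skip}$; $[\![X:=e]\!]=X:=e$; $[\![c_1;c_2]\!]=[\![c_1]\!];[\![c_2]\!]$; $[\![\mathtt{if}\ be\ \mathtt{then}\ c_1\ \mathtt{else}\ c_2]\!]=\mathtt{if}\ B(be)\ \mathtt{then}\ (\mathtt b:=B(be)\,?\,\mathtt b:1;[\![c_1]\!])\ \mathtt{else}\ (\mathtt b:=B(be)\,?\,1:\mathtt b;[\![c_2]\!])$; $[\![\mathtt{while}\ be\ \mathtt{do}\ c]\!]=(\mathtt{while}\ B(be)\ \mathtt{do}\ (\mathtt b:=B(be)\,?\,\mathtt b:1;[\![c]\!]));\ \mathtt b:=B(be)\,?\,1:\mathtt b$; $[\![X\leftarrow a[i]]\!]=X\leftarrow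 a[R(X,i)]$; $[\![a[i]\leftarrow e]\!]=a[W(i,e)]\leftarrow e$. Write $m(i)=(\mathtt b==1)\,?\,0:i$. $\mathrm{FiSLH}_P$ is the instance with $B(be)=(\mathtt b==0\ \&\&\ be)$ if $P(be)=\mathtt{false}$ and $be$ otherwise; $R(X,i)=m(i)$ if $P(X)=\mathtt{true}$ or $P(i)=\mathtt{false}$, else $i$; $W(i,e)=m(i)$ if $P(e)=\mathtt{false}$ or $P(i)=\mathtt{false}$, else $i$. *)

theory Defs
  imports Main "HOL-Library.Sublist"
begin

type_synonym vname = string
type_synonym aname = string

datatype aexp =
    ANum nat
  | AVar vname
  | AOp "nat list \<Rightarrow> nat" "aexp list"
  | ACond bexp aexp aexp
and bexp =
    BTrue
  | BFalse
  | BCmp "nat \<Rightarrow> nat \<Rightarrow> bool" aexp aexp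
  | BOp "bool list \<Rightarrow> bool" "bexp list"

datatype com =
    Skip
  | Asgn vname aexp
  | Seq com com
  | If bexp com com
  | While bexp com
  | ARead vname aname aexp
  | AWrite aname aexp aexp        (* a[e] <- e' *)

text \<open>Distinguished misspeculation flag variable.\<close>
definition bvar :: vname where "bvar = ''b''"

type_synonym sstate = "vname \<Rightarrow> nat"
type_synonym astate = "aname \<Rightarrow> nat list"

primrec aeval :: "aexp \<Rightarrow> sstate \<Rightarrow> nat" and beval :: "bexp \<Rightarrow> sstate \<Rightarrow> bool" where
  "aeval (ANum n) s = n"
| "aeval (AVar x) s = s x"
| "aeval (AOp f es) s = f (map (\<lambda>e. aeval e s) es)"
| "aeval (ACond b e1 e2) s = (if beval b s then aeval e1 s else aeval e2 s)"
| "beval BTrue s = True"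
| "beval BFalse s = False"
| "beval (BCmp f e1 e2) s = f (aeval e1 s) (aeval e2 s)"
| "beval (BOp f bs) s = f (map (\<lambda>b. beval b s) bs)"

primrec avars :: "aexp \<Rightarrow> vname set" and bvars :: "bexp \<Rightarrow> vname set" where
  "avars (ANum n) = {}"
| "avars (AVar x) = {x}"
| "avars (AOp f es) = \<Union> (set (map avars es))"
| "avars (ACond b e1 e2) = bvars b \<union> avars e1 \<union> avars e2"
| "bvars BTrue = {}"
| "bvars BFalse = {}"
| "bvars (BCmp f e1 e2) = avars e1 \<union> avars e2"
| "bvars (BOp f bs) = \<Union> (set (map bvars bs))"

fun used_vars :: "com \<Rightarrow> vname set" where
  "used_vars Skip = {}"
| "used_vars (Asgn x e) = {x} \<union> avars e"
| "used_vars (Seq c1 c2) = used_vars c1 \<union> used_vars c2"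
| "used_vars (If b c1 c2) = bvars b \<union> used_vars c1 \<union> used_vars c2"
| "used_vars (While b c) = bvars b \<union> used_vars c"
| "used_vars (ARead x a i) = {x} \<union> avars i"
| "used_vars (AWrite a i e) = avars i \<union> avars e"

datatype obs = OBranch bool | ORead aname nat | OWrite aname nat

datatype dir = DStep | DForce | DLoad aname nat | DStore aname nat

inductive seq_step :: "com \<Rightarrow> sstate \<Rightarrow> astate \<Rightarrow> obs list \<Rightarrow> com \<Rightarrow> sstate \<Rightarrow> astate \<Rightarrow> bool" where
  Asgn: "seq_step (Asgn x e) s m [] Skip (s(x := aeval e s)) m"
| Seq: "seq_step c1 s m os c1' s' m' \<Longrightarrow> seq_step (Seq c1 c2) s m os (Seq c1' c2) s' m'"
| SeqSkip: "seq_step (Seq Skip c) s m [] c s m"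
| If: "seq_step (If b c1 c2) s m [OBranch (beval b s)] (if beval b s then c1 else c2) s m"
| While: "seq_step (While b c) s m [] (If b (Seq c (While b c)) Skip) s m"
| Read: "aeval ie s < length (m a) \<Longrightarrow>
    seq_step (ARead x a ie) s m [ORead a (aeval ie s)] Skip (s(x := m a ! aeval ie s)) m"
| Write: "aeval ie s < length (m a) \<Longrightarrow>
    seq_step (AWrite a ie e) s m [OWrite a (aeval ie s)] Skip s (m(a := (m a)[aeval ie s := aeval e s]))"

inductive seq_steps :: "com \<Rightarrow> sstate \<Rightarrow> astate \<Rightarrow> obs list \<Rightarrow> com \<Rightarrow> sstate \<Rightarrow> astate \<Rightarrow> bool" where
  refl: "seq_steps c s m [] c s m"
| step: "seq_step c s m os1 c' s' m' \<Longrightarrow> seq_steps c' s' m' os2 c'' s'' m'' \<Longrightarrow>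
    seq_steps c s m (os1 @ os2) c'' s'' m''"

inductive spec_step :: "com \<Rightarrow> sstate \<Rightarrow> astate \<Rightarrow> bool \<Rightarrow> dir list \<Rightarrow> obs list \<Rightarrow>
    com \<Rightarrow> sstate \<Rightarrow> astate \<Rightarrow> bool \<Rightarrow> bool" where
  Asgn: "spec_step (Asgn x e) s m f [] [] Skip (s(x := aeval e s)) m f"
| Seq: "spec_step c1 s m f ds os c1' s' m' f' \<Longrightarrow>
    spec_step (Seq c1 c2) s m f ds os (Seq c1' c2) s' m' f'"
| SeqSkip: "spec_step (Seq Skip c) s m f [] [] c s m f"
| IfStep: "spec_step (If b c1 c2) s m f [DStep] [OBranch (beval b s)]
    (if beval b s then c1 else c2) s m f"
| IfForce: "spec_step (If b c1 c2) s m f [DForce] [OBranch (beval b s)]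
    (if beval b s then c2 else c1) s m True"
| While: "spec_step (While b c) s m f [] [] (If b (Seq c (While b c)) Skip) s m f"
| Read: "aeval ie s < length (m a) \<Longrightarrow>
    spec_step (ARead x a ie) s m f [DStep] [ORead a (aeval ie s)] Skip (s(x := m a ! aeval ie s)) m f"
| ReadLoad: "f \<Longrightarrow> aeval ie s \<ge> length (m a) \<Longrightarrow> j < length (m a') \<Longrightarrow>
    spec_step (ARead x a ie) s m f [DLoad a' j] [ORead a (aeval ie s)] Skip (s(x := m a' ! j)) m f"
| Write: "aeval ie s < length (m a) \<Longrightarrow>
    spec_step (AWrite a ie e) s m f [DStep] [OWrite a (aeval ie s)] Skip s
      (m(a := (m a)[aeval ie s := aeval e s])) f"
| WriteStore: "f \<Longrightarrow> aeval ie s \<ge> length (m a) \<Longrightarrow> j < length (m a') \<Longrightarrow>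
    spec_step (AWrite a ie e) s m f [DStore a' j] [OWrite a (aeval ie s)] Skip s
      (m(a' := (m a')[j := aeval e s])) f"

inductive spec_steps :: "com \<Rightarrow> sstate \<Rightarrow> astate \<Rightarrow> bool \<Rightarrow> dir list \<Rightarrow> obs list \<Rightarrow>
    com \<Rightarrow> sstate \<Rightarrow> astate \<Rightarrow> bool \<Rightarrow> bool" where
  refl: "spec_steps c s m f [] [] c s m f"
| step: "spec_step c s m f ds1 os1 c' s' m' f' \<Longrightarrow> spec_steps c' s' m' f' ds2 os2 c'' s'' m'' f'' \<Longrightarrow>
    spec_steps c s m f (ds1 @ ds2) (os1 @ os2) c'' s'' m'' f''"

definition seq_obs_eqv :: "com \<Rightarrow> sstate \<Rightarrow> astate \<Rightarrow> com \<Rightarrow> sstate \<Rightarrow> astate \<Rightarrow> bool" where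
  "seq_obs_eqv c1 s1 m1 c2 s2 m2 \<longleftrightarrow>
    (\<forall>os1 os2 c1' s1' m1' c2' s2' m2'.
       seq_steps c1 s1 m1 os1 c1' s1' m1' \<longrightarrow> seq_steps c2 s2 m2 os2 c2' s2' m2' \<longrightarrow>
       prefix os1 os2 \<or> prefix os2 os1)"

definition spec_obs_eqv :: "com \<Rightarrow> sstate \<Rightarrow> astate \<Rightarrow> bool \<Rightarrow> com \<Rightarrow> sstate \<Rightarrow> astate \<Rightarrow> bool \<Rightarrow> bool" where
  "spec_obs_eqv c1 s1 m1 f1 c2 s2 m2 f2 \<longleftrightarrow>
    (\<forall>ds os1 os2 c1' s1' m1' f1' c2' s2' m2' f2'.
       spec_steps c1 s1 m1 f1 ds os1 c1' s1' m1' f1' \<longrightarrow> spec_steps c2 s2 m2 f2 ds os2 c2' s2' m2' f2' \<longrightarrow>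
       os1 = os2)"

section \<open>Labels and IFC typing (True = public, False = secret)\<close>

type_synonym label = bool

definition lle :: "label \<Rightarrow> label \<Rightarrow> bool" where "lle l1 l2 \<longleftrightarrow> (l2 \<longrightarrow> l1)"
definition ljoin :: "label \<Rightarrow> label \<Rightarrow> label" where "ljoin l1 l2 = (l1 \<and> l2)"

definition alabel :: "(vname \<Rightarrow> label) \<Rightarrow> aexp \<Rightarrow> label" where
  "alabel P e \<longleftrightarrow> (\<forall>x\<in>avars e. P x)"
definition blabel :: "(vname \<Rightarrow> label) \<Rightarrow> bexp \<Rightarrow> label" where
  "blabel P b \<longleftrightarrow> (\<forall>x\<in>bvars b. P x)"

definition pub_equiv :: "(vname \<Rightarrow> label) \<Rightarrow> sstate \<Rightarrow> sstate \<Rightarrow> bool" where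
  "pub_equiv P s1 s2 \<longleftrightarrow> (\<forall>x. P x \<longrightarrow> s1 x = s2 x)"
definition apub_equiv :: "(aname \<Rightarrow> label) \<Rightarrow> astate \<Rightarrow> astate \<Rightarrow> bool" where
  "apub_equiv PA m1 m2 \<longleftrightarrow> (\<forall>a. PA a \<longrightarrow> length (m1 a) = length (m2 a) \<and> m1 a = m2 a)"

inductive well_typed :: "(vname \<Rightarrow> label) \<Rightarrow> (aname \<Rightarrow> label) \<Rightarrow> label \<Rightarrow> com \<Rightarrow> bool" where
  WT_Skip: "well_typed P PA pc Skip"
| WT_Asgn: "lle (ljoin pc (alabel P e)) (P x) \<Longrightarrow> well_typed P PA pc (Asgn x e)"
| WT_Seq: "well_typed P PA pc c1 \<Longrightarrow> well_typed P PA pc c2 \<Longrightarrow> well_typed P PA pc (Seq c1 c2)"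
| WT_If: "well_typed P PA (ljoin pc (blabel P b)) c1 \<Longrightarrow> well_typed P PA (ljoin pc (blabel P b)) c2 \<Longrightarrow>
    well_typed P PA pc (If b c1 c2)"
| WT_While: "well_typed P PA (ljoin pc (blabel P b)) c \<Longrightarrow> well_typed P PA pc (While b c)"
| WT_Read: "lle (ljoin (ljoin pc (alabel P i)) (PA a)) (P x) \<Longrightarrow> well_typed P PA pc (ARead x a i)"
| WT_Write: "lle (ljoin (ljoin pc (alabel P i)) (alabel P e)) (PA a) \<Longrightarrow> well_typed P PA pc (AWrite a i e)"

definition bAnd :: "bexp \<Rightarrow> bexp \<Rightarrow> bexp" where
  "bAnd b1 b2 = BOp (\<lambda>l. l ! 0 \<and> l ! 1) [b1, b2]"

definition bEq :: "aexp \<Rightarrow> aexp \<Rightarrow> bexp" where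
  "bEq e1 e2 = BCmp (=) e1 e2"

definition mask :: "aexp \<Rightarrow> aexp" where
  "mask i = ACond (bEq (AVar bvar) (ANum 1)) (ANum 0) i"

definition fiB :: "(vname \<Rightarrow> label) \<Rightarrow> bexp \<Rightarrow> bexp" where
  "fiB P be = (if \<not> blabel P be then bAnd (bEq (AVar bvar) (ANum 0)) be else be)"

definition fiR :: "(vname \<Rightarrow> label) \<Rightarrow> vname \<Rightarrow> aexp \<Rightarrow> aexp" where
  "fiR P x i = (if P x \<or> \<not> alabel P i then mask i else i)"

definition fiW :: "(vname \<Rightarrow> label) \<Rightarrow> aexp \<Rightarrow> aexp \<Rightarrow> aexp" where
  "fiW P i e = (if \<not> alabel P e \<or> \<not> alabel P i then mask i else i)"

fun fislh :: "(vname \<Rightarrow> label) \<Rightarrow> com \<Rightarrow> com" where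
  "fislh P Skip = Skip"
| "fislh P (Asgn x e) = Asgn x e"
| "fislh P (Seq c1 c2) = Seq (fislh P c1) (fislh P c2)"
| "fislh P (If be c1 c2) =
    If (fiB P be)
      (Seq (Asgn bvar (ACond (fiB P be) (AVar bvar) (ANum 1))) (fislh P c1))
      (Seq (Asgn bvar (ACond (fiB P be) (ANum 1) (AVar bvar))) (fislh P c2))"
| "fislh P (While be c) =
    Seq (While (fiB P be) (Seq (Asgn bvar (ACond (fiB P be) (AVar bvar) (ANum 1))) (fislh P c)))
        (Asgn bvar (ACond (fiB P be) (ANum 1) (AVar bvar)))"
| "fislh P (ARead x a i) = ARead x a (fiR P x i)"
| "fislh P (AWrite a i e) = AWrite a (fiW P i e) e"

end

theory Submission
  imports Defs
begin

text \<open>Two speculative runs of the translated program driven by the same directives stay in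
  lockstep.  Until a branch is forced, a speculative run is a sequential run of the
  translation, which simulates the source program and never raises the misspeculation flag;
  so sequential observational equivalence of the source makes the observations agree.  A
  forced branch is followed in both runs by the flag update of the wrong branch, which raises
  the flag.  From then on guards and indices are masked: a read into a public variable, a
  write of secret data and any access at a secret index go to index 0, which is in bounds.
  Hence out-of-bounds loads only reach secret variables, out-of-bounds stores only write
  public data, the public data of the two runs stay equal by well-typedness, and the masked
  guards and indices, which determine the observations, agree.\<close>

text \<open>Keeps \<open>ANum 1\<close> in the flag updates from being rewritten to \<open>ANum (Suc 0)\<close>, which no
  longer matches the commands produced by \<^const>\<open>fislh\<close>.\<close>

declare One_nat_def [simp del]

section \<open>Evaluation under the misspeculation flag\<close>

lemma eval_pub_equiv:
  "alabel P e \<Longrightarrow> pub_equiv P s1 s2 \<Longrightarrow> aeval e s1 = aeval e s2"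
  "blabel P b \<Longrightarrow> pub_equiv P s1 s2 \<Longrightarrow> beval b s1 = beval b s2"
  unfolding alabel_def blabel_def
proof (induction e and b)
  case (AOp f es) then show ?case by (auto intro!: arg_cong[where f=f])
next
  case (BOp f bs) then show ?case by (auto intro!: arg_cong[where f=f])
qed (auto simp: pub_equiv_def)

lemma aeval_mask: "aeval (mask i) s = (if s bvar = 1 then 0 else aeval i s)"
  by (simp add: mask_def bEq_def)

lemma beval_fiB_unflagged: "s bvar = 0 \<Longrightarrow> beval (fiB P be) s = beval be s"
  by (simp add: fiB_def bAnd_def bEq_def)

lemma beval_fiB_flagged:
  "s1 bvar = 1 \<Longrightarrow> s2 bvar = 1 \<Longrightarrow> pub_equiv P s1 s2 \<Longrightarrow> beval (fiB P be) s1 = beval (fiB P be) s2"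
  using eval_pub_equiv(2)[of P be s1 s2] by (auto simp: fiB_def bAnd_def bEq_def)

lemma aeval_fiR_unflagged: "s bvar = 0 \<Longrightarrow> aeval (fiR P x i) s = aeval i s"
  by (simp add: fiR_def aeval_mask)

lemma aeval_fiW_unflagged: "s bvar = 0 \<Longrightarrow> aeval (fiW P i e) s = aeval i s"
  by (simp add: fiW_def aeval_mask)

lemma aeval_fiR_flagged:
  "s1 bvar = 1 \<Longrightarrow> s2 bvar = 1 \<Longrightarrow> pub_equiv P s1 s2 \<Longrightarrow> aeval (fiR P x i) s1 = aeval (fiR P x i) s2"
  by (auto simp: fiR_def aeval_mask intro: eval_pub_equiv(1))

lemma aeval_fiW_flagged:
  "s1 bvar = 1 \<Longrightarrow> s2 bvar = 1 \<Longrightarrow> pub_equiv P s1 s2 \<Longrightarrow> aeval (fiW P i e) s1 = aeval (fiW P i e) s2"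
  by (auto simp: fiW_def aeval_mask intro: eval_pub_equiv(1))

lemma aeval_fiR_masked: "s bvar = 1 \<Longrightarrow> P x \<Longrightarrow> aeval (fiR P x i) s = 0"
  by (simp add: fiR_def aeval_mask)

lemma aeval_fiW_masked: "s bvar = 1 \<Longrightarrow> \<not> alabel P e \<Longrightarrow> aeval (fiW P i e) s = 0"
  by (simp add: fiW_def aeval_mask)

text \<open>Each flag update raises the flag exactly when its branch is entered against the guard.\<close>

abbreviation flag_then :: "(vname \<Rightarrow> bool) \<Rightarrow> bexp \<Rightarrow> com" where
  "flag_then P be \<equiv> Asgn bvar (ACond (fiB P be) (AVar bvar) (ANum 1))"

abbreviation flag_else :: "(vname \<Rightarrow> bool) \<Rightarrow> bexp \<Rightarrow> com" where
  "flag_else P be \<equiv> Asgn bvar (ACond (fiB P be) (ANum 1) (AVar bvar))"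

abbreviation fislh_loop :: "(vname \<Rightarrow> bool) \<Rightarrow> bexp \<Rightarrow> com \<Rightarrow> com" where
  "fislh_loop P be C \<equiv> While (fiB P be) (Seq (flag_then P be) C)"

lemma seq_step_Skip: "\<not> seq_step Skip s m os c' s' m'"
  by (auto elim: seq_step.cases)

lemma seq_step_Seq_cases:
  "seq_step (Seq c1 c2) s m os c' s' m' \<Longrightarrow>
    (c1 = Skip \<and> os = [] \<and> c' = c2 \<and> s' = s \<and> m' = m) \<or>
    (\<exists>c1'. seq_step c1 s m os c1' s' m' \<and> c' = Seq c1' c2)"
  by (cases rule: seq_step.cases) auto

inductive_cases seq_step_AsgnE: "seq_step (Asgn x e) s m os c' s' m'"
inductive_cases seq_step_IfE: "seq_step (If b c1 c2) s m os c' s' m'"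
inductive_cases seq_step_WhileE: "seq_step (While b c) s m os c' s' m'"
inductive_cases seq_step_ReadE: "seq_step (ARead x a i) s m os c' s' m'"
inductive_cases seq_step_WriteE: "seq_step (AWrite a i e) s m os c' s' m'"

lemma spec_step_Skip: "\<not> spec_step Skip s m f ds os c' s' m' f'"
  by (auto elim: spec_step.cases)

inductive_cases spec_step_SeqE: "spec_step (Seq c1 c2) s m f ds os c' s' m' f'"

lemma spec_step_Seq_cases:
  "spec_step (Seq c1 c2) s m f ds os c' s' m' f' \<Longrightarrow>
    (c1 = Skip \<and> ds = [] \<and> os = [] \<and> c' = c2 \<and> s' = s \<and> m' = m \<and> f' = f) \<or>
    (\<exists>c1'. spec_step c1 s m f ds os c1' s' m' f' \<and> c' = Seq c1' c2)"
  by (erule spec_step_SeqE) auto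

inductive_cases spec_step_AsgnE: "spec_step (Asgn x e) s m f ds os c' s' m' f'"
inductive_cases spec_step_IfE: "spec_step (If b c1 c2) s m f ds os c' s' m' f'"
inductive_cases spec_step_WhileE: "spec_step (While b c) s m f ds os c' s' m' f'"
inductive_cases spec_step_ReadE: "spec_step (ARead x a i) s m f ds os c' s' m' f'"
inductive_cases spec_step_WriteE: "spec_step (AWrite a i e) s m f ds os c' s' m' f'"

lemma seq_step_seq_steps: "seq_step c s m os c' s' m' \<Longrightarrow> seq_steps c s m os c' s' m'"
  using seq_steps.step[OF _ seq_steps.refl] by fastforce

section \<open>Sequential runs of the translation\<close>

text \<open>\<open>fislh_sim P C c s\<close>: the command \<open>C\<close>, reached by running the translation sequentially
  with the flag clear, corresponds to the source command \<open>c\<close> in state \<open>s\<close>.  The flag updates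
  and the loop exit update are the only steps of the translation without a source
  counterpart.\<close>

inductive fislh_sim :: "(vname \<Rightarrow> bool) \<Rightarrow> com \<Rightarrow> com \<Rightarrow> sstate \<Rightarrow> bool" for P where
  sim_atomic: "bvar \<notin> used_vars c \<Longrightarrow> s bvar = 0 \<Longrightarrow> (\<forall>c1 c2. c \<noteq> Seq c1 c2) \<Longrightarrow>
    fislh_sim P (fislh P c) c s"
| sim_seq: "fislh_sim P C c s \<Longrightarrow> bvar \<notin> used_vars c2 \<Longrightarrow>
    fislh_sim P (Seq C (fislh P c2)) (Seq c c2) s"
| sim_then: "beval (fiB P be) s \<Longrightarrow> fislh_sim P C c s \<Longrightarrow> fislh_sim P (Seq (flag_then P be) C) c s"
| sim_else: "\<not> beval (fiB P be) s \<Longrightarrow> fislh_sim P C c s \<Longrightarrow> fislh_sim P (Seq (flag_else P be) C) c s"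
| sim_skip: "fislh_sim P C c s \<Longrightarrow> fislh_sim P (Seq Skip C) c s"
| sim_loop: "fislh_sim P C c s \<Longrightarrow> bvar \<notin> used_vars (While be c0) \<Longrightarrow>
    fislh_sim P (Seq (Seq C (fislh_loop P be (fislh P c0))) (flag_else P be)) (Seq c (While be c0)) s"
| sim_loop_if: "bvar \<notin> used_vars (While be c0) \<Longrightarrow> s bvar = 0 \<Longrightarrow>
    fislh_sim P (Seq (If (fiB P be) (Seq (Seq (flag_then P be) (fislh P c0)) (fislh_loop P be (fislh P c0))) Skip)
        (flag_else P be))
      (If be (Seq c0 (While be c0)) Skip) s"
| sim_loop_exit: "\<not> beval (fiB P be) s \<Longrightarrow> s bvar = 0 \<Longrightarrow> fislh_sim P (flag_else P be) Skip s"

lemma fislh_sim_flag: "fislh_sim P C c s \<Longrightarrow> s bvar = 0"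
  by (induction rule: fislh_sim.induct) auto

lemma fislh_sim_fislh: "bvar \<notin> used_vars c \<Longrightarrow> s bvar = 0 \<Longrightarrow> fislh_sim P (fislh P c) c s"
proof (induction c)
  case (Seq c1 c2)
  then show ?case using sim_seq[of P "fislh P c1" c1 s c2] by simp
qed (rule sim_atomic; simp)+

lemma fislh_sim_Skip: "s bvar = 0 \<Longrightarrow> fislh_sim P Skip Skip s"
  using sim_atomic[of Skip s P] by simp

lemma fislh_eq_Skip_iff: "fislh P c = Skip \<longleftrightarrow> c = Skip"
  by (cases c) auto

lemma fislh_sim_SkipD: "fislh_sim P Skip c s \<Longrightarrow> c = Skip"
  by (cases rule: fislh_sim.cases) (auto simp: fislh_eq_Skip_iff eq_commute[of Skip])

definition stutter_or_match ::
    "(vname \<Rightarrow> bool) \<Rightarrow> com \<Rightarrow> com \<Rightarrow> sstate \<Rightarrow> astate \<Rightarrow> obs list \<Rightarrow> sstate \<Rightarrow> astate \<Rightarrow> bool" where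
  "stutter_or_match P C' c s m os s' m' \<longleftrightarrow>
    (os = [] \<and> s' = s \<and> m' = m \<and> fislh_sim P C' c s) \<or>
    (\<exists>c'. seq_step c s m os c' s' m' \<and> fislh_sim P C' c' s')"

lemma stutter_or_match_match:
  "seq_step c s m os c' s' m' \<Longrightarrow> fislh_sim P C' c' s' \<Longrightarrow> stutter_or_match P C' c s m os s' m'"
  unfolding stutter_or_match_def by blast

lemma stutter_or_match_Seq:
  assumes "stutter_or_match P C' c s m os s' m'" "bvar \<notin> used_vars c2"
  shows "stutter_or_match P (Seq C' (fislh P c2)) (Seq c c2) s m os s' m'"
  using assms sim_seq seq_step.Seq unfolding stutter_or_match_def by blast

lemma stutter_or_match_loop:
  assumes "stutter_or_match P C' c s m os s' m'" "bvar \<notin> used_vars (While be c0)"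
  shows "stutter_or_match P (Seq (Seq C' (fislh_loop P be (fislh P c0))) (flag_else P be))
    (Seq c (While be c0)) s m os s' m'"
  using assms sim_loop seq_step.Seq unfolding stutter_or_match_def by blast

lemma fislh_sim_step_atomic:
  assumes "bvar \<notin> used_vars c" "s bvar = 0" "\<forall>c1 c2. c \<noteq> Seq c1 c2"
    and step: "seq_step (fislh P c) s m os C' s' m'"
  shows "stutter_or_match P C' c s m os s' m'"
proof (cases c)
  case Skip
  with step show ?thesis by (simp add: seq_step_Skip)
next
  case (Asgn x e)
  with step assms(1,2) show ?thesis
    by (auto elim!: seq_step_AsgnE intro!: stutter_or_match_match seq_step.Asgn fislh_sim_Skip)
next
  case (If be c1 c2)
  have guard: "beval (fiB P be) s = beval be s"
    using assms(2) by (rule beval_fiB_unflagged)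
  have "fislh_sim P (fislh P c1) c1 s" "fislh_sim P (fislh P c2) c2 s"
    using If assms(1,2) by (simp_all add: fislh_sim_fislh)
  then have "fislh_sim P C' (if beval be s then c1 else c2) s'"
    using step If guard by (auto elim!: seq_step_IfE intro: sim_then sim_else)
  moreover have "os = [OBranch (beval be s)]" "s' = s" "m' = m"
    using step If guard by (auto elim: seq_step_IfE)
  then have "seq_step c s m os (if beval be s then c1 else c2) s' m'"
    unfolding If by (simp only:) (rule seq_step.If)
  ultimately show ?thesis by (intro stutter_or_match_match)
next
  case (While be c0)
  with step assms(1,2) show ?thesis
    by (auto dest!: seq_step_Seq_cases elim!: seq_step_WhileE
        intro!: stutter_or_match_match seq_step.While sim_loop_if)
next
  case (ARead x a i)
  with step assms(1,2) show ?thesis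
    by (auto simp: aeval_fiR_unflagged elim!: seq_step_ReadE
        intro!: stutter_or_match_match seq_step.Read fislh_sim_Skip)
next
  case (AWrite a i e)
  with step assms(1,2) show ?thesis
    by (auto simp: aeval_fiW_unflagged elim!: seq_step_WriteE
        intro!: stutter_or_match_match seq_step.Write fislh_sim_Skip)
qed (use assms(3) in blast)

lemma fislh_sim_step_loop_if:
  assumes "bvar \<notin> used_vars (While be c0)" "s bvar = 0"
    and step: "seq_step (Seq (If (fiB P be) (Seq (Seq (flag_then P be) (fislh P c0))
      (fislh_loop P be (fislh P c0))) Skip) (flag_else P be)) s m os C' s' m'"
  shows "stutter_or_match P C' (If be (Seq c0 (While be c0)) Skip) s m os s' m'"
proof -
  have guard: "beval (fiB P be) s = beval be s"
    using assms(2) by (rule beval_fiB_unflagged)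
  have body: "fislh_sim P (Seq (flag_then P be) (fislh P c0)) c0 s" if "beval be s"
    using that guard assms(1,2) by (auto intro!: sim_then fislh_sim_fislh)
  have exit: "fislh_sim P (Seq Skip (flag_else P be)) Skip s" if "\<not> beval be s"
    using that guard assms(2) by (auto intro!: sim_skip sim_loop_exit)
  have "os = [OBranch (beval be s)]" "s' = s" "m' = m"
    and C': "C' = Seq (if beval be s then Seq (Seq (flag_then P be) (fislh P c0))
      (fislh_loop P be (fislh P c0)) else Skip) (flag_else P be)"
    using step guard by (auto dest!: seq_step_Seq_cases elim!: seq_step_IfE)
  then have "seq_step (If be (Seq c0 (While be c0)) Skip) s m os
      (if beval be s then Seq c0 (While be c0) else Skip) s' m'"
    by (simp only:) (rule seq_step.If)
  moreover have "fislh_sim P C' (if beval be s then Seq c0 (While be c0) else Skip) s'"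
    using body exit assms(1) sim_loop \<open>s' = s\<close> unfolding C' by auto
  ultimately show ?thesis by (intro stutter_or_match_match)
qed

lemma fislh_sim_step:
  "fislh_sim P C c s \<Longrightarrow> seq_step C s m os C' s' m' \<Longrightarrow> stutter_or_match P C' c s m os s' m'"
proof (induction arbitrary: m os C' s' m' rule: fislh_sim.induct)
  case (sim_atomic c s)
  then show ?case by (rule fislh_sim_step_atomic)
next
  case (sim_seq C c s c2)
  from seq_step_Seq_cases[OF sim_seq.prems] show ?case
  proof (elim disjE exE conjE)
    assume "C = Skip" "os = []" "C' = fislh P c2" "s' = s" "m' = m"
    moreover have "c = Skip" using sim_seq.hyps(1) \<open>C = Skip\<close> by (simp add: fislh_sim_SkipD)
    ultimately show ?thesis
      using sim_seq.hyps fislh_sim_flag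
      by (auto intro!: stutter_or_match_match seq_step.SeqSkip fislh_sim_fislh)
  next
    fix C1 assume "seq_step C s m os C1 s' m'" "C' = Seq C1 (fislh P c2)"
    then show ?thesis using sim_seq.IH sim_seq.hyps(2) stutter_or_match_Seq by blast
  qed
next
  case (sim_loop C c s be c0)
  from seq_step_Seq_cases[OF sim_loop.prems] obtain C0 where C0:
    "seq_step (Seq C (fislh_loop P be (fislh P c0))) s m os C0 s' m'" "C' = Seq C0 (flag_else P be)"
    by (auto simp: seq_step_Skip)
  from seq_step_Seq_cases[OF C0(1)] show ?case
  proof (elim disjE exE conjE)
    assume "C = Skip" "os = []" "C0 = fislh_loop P be (fislh P c0)" "s' = s" "m' = m"
    moreover have "c = Skip" using sim_loop.hyps(1) \<open>C = Skip\<close> by (simp add: fislh_sim_SkipD)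
    ultimately show ?thesis
      using sim_loop.hyps fislh_sim_flag fislh_sim_fislh[of "While be c0" s P] C0(2)
      by (auto intro!: stutter_or_match_match seq_step.SeqSkip)
  next
    fix C1 assume "seq_step C s m os C1 s' m'" "C0 = Seq C1 (fislh_loop P be (fislh P c0))"
    then show ?thesis using sim_loop.IH sim_loop.hyps(2) stutter_or_match_loop C0(2) by blast
  qed
next
  case (sim_loop_if be c0 s)
  then show ?case by (rule fislh_sim_step_loop_if)
qed (auto simp: stutter_or_match_def fislh_sim_Skip seq_step_Skip
      dest!: seq_step_Seq_cases elim!: seq_step_AsgnE intro: sim_skip)

lemma fislh_sim_steps:
  "seq_steps C s m os C' s' m' \<Longrightarrow> fislh_sim P C c s \<Longrightarrow>
    s' bvar = 0 \<and> (\<exists>c'. seq_steps c s m os c' s' m')"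
proof (induction arbitrary: c rule: seq_steps.induct)
  case (refl C s m)
  then show ?case using fislh_sim_flag seq_steps.refl by blast
next
  case (step C s m os1 C1 s1 m1 os2 C2 s2 m2)
  from fislh_sim_step[OF step.prems step.hyps(1)] show ?case
    unfolding stutter_or_match_def using step.IH seq_steps.step by fastforce
qed

definition seq_flag_clear :: "com \<Rightarrow> sstate \<Rightarrow> astate \<Rightarrow> bool" where
  "seq_flag_clear C s m \<longleftrightarrow> (\<forall>os C' s' m'. seq_steps C s m os C' s' m' \<longrightarrow> s' bvar = 0)"

lemma seq_flag_clear_step:
  "seq_flag_clear C s m \<Longrightarrow> seq_step C s m os C' s' m' \<Longrightarrow> seq_flag_clear C' s' m' \<and> s' bvar = 0"
  unfolding seq_flag_clear_def using seq_steps.step seq_steps.refl by blast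

lemma seq_flag_clear_fislh:
  "bvar \<notin> used_vars c \<Longrightarrow> s bvar = 0 \<Longrightarrow> seq_flag_clear (fislh P c) s m"
  unfolding seq_flag_clear_def using fislh_sim_steps fislh_sim_fislh by blast

lemma seq_obs_eqv_fislh:
  assumes "bvar \<notin> used_vars c" "s1 bvar = 0" "s2 bvar = 0" "seq_obs_eqv c s1 m1 c s2 m2"
  shows "seq_obs_eqv (fislh P c) s1 m1 (fislh P c) s2 m2"
  using assms fislh_sim_steps[OF _ fislh_sim_fislh] unfolding seq_obs_eqv_def by metis

lemma seq_obs_eqv_step:
  assumes "seq_obs_eqv C s1 m1 C s2 m2"
    and "seq_step C s1 m1 os C' s1' m1'" "seq_step C s2 m2 os C' s2' m2'"
  shows "seq_obs_eqv C' s1' m1' C' s2' m2'"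
  unfolding seq_obs_eqv_def
proof (intro allI impI)
  fix os1 os2 C1 s1'' m1'' C2 s2'' m2''
  assume "seq_steps C' s1' m1' os1 C1 s1'' m1''" "seq_steps C' s2' m2' os2 C2 s2'' m2''"
  then have "prefix (os @ os1) (os @ os2) \<or> prefix (os @ os2) (os @ os1)"
    using assms seq_steps.step unfolding seq_obs_eqv_def by blast
  then show "prefix os1 os2 \<or> prefix os2 os1" by simp
qed

section \<open>Commands reached by speculative runs of the translation\<close>

text \<open>Every flag update pairs with the guard it tests, and every loop is followed by its
  exit update; forcing a branch therefore always leads to an update that raises the flag.\<close>

inductive fislh_residual :: "(vname \<Rightarrow> bool) \<Rightarrow> (aname \<Rightarrow> bool) \<Rightarrow> com \<Rightarrow> bool" for P PA where
  res_Skip: "fislh_residual P PA Skip"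
| res_Asgn: "x \<noteq> bvar \<Longrightarrow> (P x \<longrightarrow> alabel P e) \<Longrightarrow> fislh_residual P PA (Asgn x e)"
| res_flag_then: "fislh_residual P PA (flag_then P be)"
| res_flag_else: "fislh_residual P PA (flag_else P be)"
| res_Seq: "fislh_residual P PA C1 \<Longrightarrow> fislh_residual P PA C2 \<Longrightarrow> fislh_residual P PA (Seq C1 C2)"
| res_If: "fislh_residual P PA C1 \<Longrightarrow> fislh_residual P PA C2 \<Longrightarrow>
    fislh_residual P PA (If (fiB P be) (Seq (flag_then P be) C1) (Seq (flag_else P be) C2))"
| res_While: "fislh_residual P PA C \<Longrightarrow>
    fislh_residual P PA (Seq (fislh_loop P be C) (flag_else P be))"
| res_loop_if: "fislh_residual P PA C \<Longrightarrow>
    fislh_residual P PA (Seq (If (fiB P be) (Seq (Seq (flag_then P be) C) (fislh_loop P be C)) Skip)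
      (flag_else P be))"
| res_loop: "fislh_residual P PA C \<Longrightarrow> fislh_residual P PA C' \<Longrightarrow>
    fislh_residual P PA (Seq (Seq C' (fislh_loop P be C)) (flag_else P be))"
| res_Read: "x \<noteq> bvar \<Longrightarrow> (P x \<longrightarrow> alabel P i \<and> PA a) \<Longrightarrow>
    fislh_residual P PA (ARead x a (fiR P x i))"
| res_Write: "(PA a \<longrightarrow> alabel P i \<and> alabel P e) \<Longrightarrow> fislh_residual P PA (AWrite a (fiW P i e) e)"

text \<open>What one-step noninterference needs of a command.  There is no program counter label: in
  every phase both runs take the same branches, so implicit flows cannot arise.\<close>

fun fislh_safe :: "(vname \<Rightarrow> bool) \<Rightarrow> (aname \<Rightarrow> bool) \<Rightarrow> com \<Rightarrow> bool" where
  "fislh_safe P PA Skip = True"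
| "fislh_safe P PA (Asgn x e) =
    (if x = bvar then \<exists>B. e = ACond B (AVar bvar) (ANum 1) \<or> e = ACond B (ANum 1) (AVar bvar)
     else P x \<longrightarrow> alabel P e)"
| "fislh_safe P PA (Seq c1 c2) = (fislh_safe P PA c1 \<and> fislh_safe P PA c2)"
| "fislh_safe P PA (If B c1 c2) = ((\<exists>be. B = fiB P be) \<and> fislh_safe P PA c1 \<and> fislh_safe P PA c2)"
| "fislh_safe P PA (While B c) = ((\<exists>be. B = fiB P be) \<and> fislh_safe P PA c)"
| "fislh_safe P PA (ARead x a j) = (x \<noteq> bvar \<and> (\<exists>i. j = fiR P x i \<and> (P x \<longrightarrow> alabel P i \<and> PA a)))"
| "fislh_safe P PA (AWrite a j e) = (\<exists>i. j = fiW P i e \<and> (PA a \<longrightarrow> alabel P i \<and> alabel P e))"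

lemma fislh_residual_safe: "fislh_residual P PA C \<Longrightarrow> fislh_safe P PA C"
  by (induction rule: fislh_residual.induct) auto

lemma well_typed_fislh_residual:
  "well_typed P PA pc c \<Longrightarrow> bvar \<notin> used_vars c \<Longrightarrow> fislh_residual P PA (fislh P c)"
  by (induction rule: well_typed.induct)
    (auto intro: fislh_residual.intros simp: lle_def ljoin_def)

lemma fislh_residual_step:
  "fislh_residual P PA C \<Longrightarrow> spec_step C s m f ds os C' s' m' f' \<Longrightarrow> fislh_residual P PA C'"
  by (induction arbitrary: s m f ds os C' s' m' f' rule: fislh_residual.induct)
    (auto dest!: spec_step_Seq_cases elim!: spec_step_AsgnE spec_step_IfE spec_step_WhileE
      spec_step_ReadE spec_step_WriteE simp: spec_step_Skip
      intro: fislh_residual.intros res_Seq[OF res_flag_then] res_Seq[OF res_flag_else]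
        res_Seq[OF res_Skip res_flag_else] res_loop[OF _ res_Seq[OF res_flag_then]])

fun needs_dir :: "com \<Rightarrow> bool" where
  "needs_dir (Seq c1 c2) = (c1 \<noteq> Skip \<and> needs_dir c1)"
| "needs_dir (If b c1 c2) = True"
| "needs_dir (ARead x a i) = True"
| "needs_dir (AWrite a i e) = True"
| "needs_dir _ = False"

lemma spec_step_dirs:
  "spec_step C s m f ds os C' s' m' f' \<Longrightarrow>
    length os = length ds \<and> length ds \<le> 1 \<and> (ds = [] \<longleftrightarrow> \<not> needs_dir C)"
proof (induction rule: spec_step.induct)
  case (Seq c1 s m f ds os c1' s' m' f' c2)
  then have "c1 \<noteq> Skip" by (auto simp: spec_step_Skip)
  with Seq show ?case by simp
qed auto

lemma spec_step_dirs_append: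
  assumes "spec_step C s1 m1 f1 ds1 os1 C1 s1' m1' f1'" "spec_step C s2 m2 f2 ds2 os2 C2 s2' m2' f2'"
    and "ds1 @ ds1' = ds2 @ ds2'"
  shows "ds1 = ds2 \<and> ds1' = ds2'"
proof -
  have "length ds1 = length ds2"
    using spec_step_dirs[OF assms(1)] spec_step_dirs[OF assms(2)] by (cases ds1; cases ds2) auto
  then show ?thesis using assms(3) by simp
qed

lemma spec_steps_length: "spec_steps C s m f ds os C' s' m' f' \<Longrightarrow> length os = length ds"
  by (induction rule: spec_steps.induct) (auto dest: spec_step_dirs)

lemma spec_step_array_length: "spec_step C s m f ds os C' s' m' f' \<Longrightarrow> length (m' a) = length (m a)"
  by (induction rule: spec_step.induct) auto

lemma spec_step_flag: "spec_step C s m f ds os C' s' m' f' \<Longrightarrow> f' = (f \<or> ds = [DForce])"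
  by (induction rule: spec_step.induct) auto

lemma spec_step_cmd_det:
  "spec_step C s1 m1 f1 ds os C1 s1' m1' f1' \<Longrightarrow> spec_step C s2 m2 f2 ds os C2 s2' m2' f2' \<Longrightarrow> C1 = C2"
proof (induction arbitrary: s2 m2 f2 C2 s2' m2' f2' rule: spec_step.induct)
  case (Seq c1 s m f ds os c1' s' m' f' c2)
  from spec_step_Seq_cases[OF Seq.prems] show ?case
    using Seq.hyps(1) Seq.IH spec_step_Skip by blast
next
  case (SeqSkip c s m f)
  from spec_step_Seq_cases[OF SeqSkip.prems] show ?case using spec_step_Skip by blast
qed (auto elim: spec_step_AsgnE spec_step_IfE spec_step_WhileE spec_step_ReadE spec_step_WriteE)

lemma spec_step_unforced:
  "spec_step C s m f ds os C' s' m' f' \<Longrightarrow> \<not> f \<Longrightarrow> ds \<noteq> [DForce] \<Longrightarrow> seq_step C s m os C' s' m'"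
proof (induction rule: spec_step.induct)
  case IfStep
  show ?case by (rule seq_step.If)
qed (auto intro: seq_step.intros)

lemma spec_step_forced:
  "spec_step C s m f ds os C' s' m' f' \<Longrightarrow> ds = [DForce] \<Longrightarrow>
    (\<exists>C''. seq_step C s m os C'' s m) \<and> s' = s \<and> m' = m"
  by (induction rule: spec_step.induct) (auto intro: seq_step.intros)

fun flag_pending :: "com \<Rightarrow> sstate \<Rightarrow> bool" where
  "flag_pending (Seq c1 c2) s = (if c1 = Skip then flag_pending c2 s else flag_pending c1 s)"
| "flag_pending (Asgn x e) s = (x = bvar \<and> aeval e s = 1)"
| "flag_pending _ s = False"

fun head_is_asgn :: "com \<Rightarrow> bool" where
  "head_is_asgn (Seq c1 c2) = (c1 \<noteq> Skip \<and> head_is_asgn c1)"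
| "head_is_asgn (Asgn x e) = True"
| "head_is_asgn _ = False"

lemma spec_step_flag_pending:
  "spec_step C s m f ds os C' s' m' f' \<Longrightarrow> flag_pending C s \<Longrightarrow>
    ds = [] \<and> os = [] \<and> m' = m \<and> f' = f \<and>
    (if head_is_asgn C then s' = s(bvar := 1) else s' = s \<and> flag_pending C' s)"
proof (induction rule: spec_step.induct)
  case (Seq c1 s m f ds os c1' s' m' f' c2)
  then have "c1 \<noteq> Skip" by (auto simp: spec_step_Skip)
  with Seq show ?case by (cases "c1' = Skip") auto
qed auto

lemma forced_step_flag_pending:
  "fislh_residual P PA C \<Longrightarrow> spec_step C s m f ds os C' s' m' f' \<Longrightarrow> ds = [DForce] \<Longrightarrow>
    flag_pending C' s'"
proof (induction arbitrary: s m f ds os C' s' m' f' rule: fislh_residual.induct)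
  case (res_Seq C1 C2)
  from spec_step_Seq_cases[OF res_Seq.prems(1)] res_Seq.prems(2) obtain C1' where
    "spec_step C1 s m f ds os C1' s' m' f'" "C' = Seq C1' C2" by auto
  moreover from this have "flag_pending C1' s'" using res_Seq.IH(1) res_Seq.prems(2) by blast
  ultimately show ?case by (cases "C1' = Skip") auto
next
  case (res_loop C C0 be)
  from spec_step_Seq_cases[OF res_loop.prems(1)] obtain X where
    X: "spec_step (Seq C0 (fislh_loop P be C)) s m f ds os X s' m' f'" "C' = Seq X (flag_else P be)"
    by auto
  from spec_step_Seq_cases[OF X(1)] res_loop.prems(2) X(2) obtain C0' where
    "spec_step C0 s m f ds os C0' s' m' f'" "C' = Seq (Seq C0' (fislh_loop P be C)) (flag_else P be)"
    by auto
  moreover from this have "flag_pending C0' s'" using res_loop.IH(2) res_loop.prems(2) by blast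
  ultimately show ?case by (cases "C0' = Skip") auto
next
  case (res_If C1 C2 be)
  then show ?case by (auto elim: spec_step_IfE)
next
  case (res_While C be)
  then show ?case by (auto dest!: spec_step_Seq_cases elim: spec_step_WhileE)
next
  case (res_loop_if C be)
  then show ?case by (auto dest!: spec_step_Seq_cases elim: spec_step_IfE)
qed (auto simp: spec_step_Skip elim: spec_step_AsgnE spec_step_ReadE spec_step_WriteE)

lemma spec_step_flag_set:
  "spec_step C s m f ds os C' s' m' f' \<Longrightarrow> fislh_safe P PA C \<Longrightarrow> s bvar = 1 \<Longrightarrow> s' bvar = 1"
  by (induction rule: spec_step.induct) auto

section \<open>One-step noninterference\<close>

text \<open>Agreement on public data, except on the flag, whose value is tracked separately.\<close>

definition low_equiv :: "(vname \<Rightarrow> label) \<Rightarrow> (aname \<Rightarrow> label) \<Rightarrow> sstate \<Rightarrow> astate \<Rightarrow> sstate \<Rightarrow> astate \<Rightarrow> bool"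
  where
  "low_equiv P PA s1 m1 s2 m2 \<longleftrightarrow> (\<forall>x. x \<noteq> bvar \<longrightarrow> P x \<longrightarrow> s1 x = s2 x) \<and> apub_equiv PA m1 m2"

lemma low_equiv_update_var:
  "low_equiv P PA s1 m1 s2 m2 \<Longrightarrow> (x \<noteq> bvar \<longrightarrow> P x \<longrightarrow> v1 = v2) \<Longrightarrow>
    low_equiv P PA (s1(x := v1)) m1 (s2(x := v2)) m2"
  by (simp add: low_equiv_def)

lemma low_equiv_update_array:
  "low_equiv P PA s1 m1 s2 m2 \<Longrightarrow> (PA a \<longrightarrow> v1 = v2) \<Longrightarrow>
    low_equiv P PA s1 (m1(a := (m1 a)[i := v1])) s2 (m2(a := (m2 a)[i := v2]))"
  by (simp add: low_equiv_def apub_equiv_def)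

lemma low_equiv_if_pub_equiv:
  "pub_equiv P s1 s2 \<Longrightarrow> apub_equiv PA m1 m2 \<Longrightarrow> low_equiv P PA s1 m1 s2 m2"
  by (simp add: low_equiv_def pub_equiv_def)

text \<open>In the next three lemmas, by the last hypothesis either both runs misspeculate with the flag
  raised, or neither has misspeculated and the observations are already known to agree.\<close>

lemma spec_step_noninterference_read:
  assumes run1: "spec_step (ARead x a ie) s1 m1 f ds os1 C1 s1' m1' f1'"
    and run2: "spec_step (ARead x a ie) s2 m2 f ds os2 C2 s2' m2' f2'"
    and "fislh_safe P PA (ARead x a ie)" "pub_equiv P s1 s2" "s1 bvar = s2 bvar" "apub_equiv PA m1 m2"
    and "\<forall>a. 0 < length (m1 a)" "s1 bvar = 1 \<or> (\<not> f \<and> os1 = os2)"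
  shows "os1 = os2 \<and> low_equiv P PA s1' m1' s2' m2'"
proof -
  obtain i where ie: "ie = fiR P x i" and x: "x \<noteq> bvar" "P x \<longrightarrow> alabel P i \<and> PA a"
    using assms(3) by auto
  have "os1 = [ORead a (aeval ie s1)]" "os2 = [ORead a (aeval ie s2)]"
    using run1 run2 by (auto elim: spec_step_ReadE)
  moreover have idx: "aeval ie s1 = aeval ie s2"
    using assms(4,5,8) calculation ie aeval_fiR_flagged by auto
  moreover have "low_equiv P PA s1' m1' s2' m2'"
  proof (cases ds)
    case Nil
    with run1 show ?thesis by (auto elim: spec_step_ReadE)
  next
    case (Cons d ds')
    with run1 run2 obtain v1 v2 where
      s': "s1' = s1(x := v1)" "m1' = m1" "s2' = s2(x := v2)" "m2' = m2"
      and load: "d = DStep \<and> v1 = m1 a ! aeval ie s1 \<and> v2 = m2 a ! aeval ie s2 \<or>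
        f \<and> length (m1 a) \<le> aeval ie s1 \<and> (\<exists>a' j. v1 = m1 a' ! j \<and> v2 = m2 a' ! j)"
      by (elim spec_step_ReadE) auto
    have "P x \<longrightarrow> v1 = v2"
    proof
      assume "P x"
      then have "\<not> (length (m1 a) \<le> aeval ie s1 \<and> f)"
        using aeval_fiR_masked[of s1 P x i] ie assms(7,8) by (auto simp: not_le)
      then show "v1 = v2"
        using load idx x \<open>P x\<close> assms(6) by (auto simp: apub_equiv_def)
    qed
    then show ?thesis
      unfolding s' using low_equiv_update_var low_equiv_if_pub_equiv assms(4,6) by blast
  qed
  ultimately show ?thesis by simp
qed

lemma spec_step_noninterference_write:
  assumes run1: "spec_step (AWrite a ie e) s1 m1 f ds os1 C1 s1' m1' f1'"
    and run2: "spec_step (AWrite a ie e) s2 m2 f ds os2 C2 s2' m2' f2'"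
    and "fislh_safe P PA (AWrite a ie e)" "pub_equiv P s1 s2" "s1 bvar = s2 bvar" "apub_equiv PA m1 m2"
    and "\<forall>a. 0 < length (m1 a)" "s1 bvar = 1 \<or> (\<not> f \<and> os1 = os2)"
  shows "os1 = os2 \<and> low_equiv P PA s1' m1' s2' m2'"
proof -
  obtain i where ie: "ie = fiW P i e" and a: "PA a \<longrightarrow> alabel P i \<and> alabel P e"
    using assms(3) by auto
  have "os1 = [OWrite a (aeval ie s1)]" "os2 = [OWrite a (aeval ie s2)]"
    using run1 run2 by (auto elim: spec_step_WriteE)
  moreover have idx: "aeval ie s1 = aeval ie s2"
    using assms(4,5,8) calculation ie aeval_fiW_flagged by auto
  moreover have "low_equiv P PA s1' m1' s2' m2'"
  proof (cases ds)
    case Nil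
    with run1 show ?thesis by (auto elim: spec_step_WriteE)
  next
    case (Cons d ds')
    with run1 run2 idx obtain b k where
      s': "s1' = s1" "m1' = m1(b := (m1 b)[k := aeval e s1])"
        "s2' = s2" "m2' = m2(b := (m2 b)[k := aeval e s2])"
      and store: "b = a \<or> f \<and> length (m1 a) \<le> aeval ie s1"
      by (elim spec_step_WriteE) auto
    have "alabel P e" if "f \<and> length (m1 a) \<le> aeval ie s1"
      using that aeval_fiW_masked[of s1 P e i] ie assms(7,8) by (metis not_le)
    then have "PA b \<longrightarrow> aeval e s1 = aeval e s2"
      using store a assms(4) eval_pub_equiv(1) by blast
    then show ?thesis
      unfolding s' using low_equiv_update_array low_equiv_if_pub_equiv assms(4,6) by blast
  qed
  ultimately show ?thesis by simp
qed

lemma spec_step_noninterference: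
  assumes "spec_step C s1 m1 f ds os1 C1 s1' m1' f1'" "spec_step C s2 m2 f ds os2 C2 s2' m2' f2'"
    and "fislh_safe P PA C" "pub_equiv P s1 s2" "s1 bvar = s2 bvar" "apub_equiv PA m1 m2"
    and "\<forall>a. 0 < length (m1 a)" "s1 bvar = 1 \<or> (\<not> f \<and> os1 = os2)"
  shows "os1 = os2 \<and> low_equiv P PA s1' m1' s2' m2'"
  using assms
proof (induction arbitrary: C2 s2' m2' f2' os2 rule: spec_step.induct)
  case (Asgn x e s1 m1 f)
  have "x \<noteq> bvar \<longrightarrow> P x \<longrightarrow> aeval e s1 = aeval e s2"
    using Asgn.prems(2,3) eval_pub_equiv(1) by auto
  then have "low_equiv P PA (s1(x := aeval e s1)) m1 (s2(x := aeval e s2)) m2"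
    using low_equiv_if_pub_equiv[OF Asgn.prems(3,5)] by (rule low_equiv_update_var[rotated])
  moreover have "os2 = [] \<and> s2' = s2(x := aeval e s2) \<and> m2' = m2"
    using Asgn.prems(1) by (auto elim: spec_step_AsgnE)
  ultimately show ?case by (simp add: fun_upd_def)
next
  case (Seq c1 s1 m1 f ds os1 c1' s1' m1' f1' c)
  from spec_step_Seq_cases[OF Seq.prems(1)] Seq.hyps(1) obtain c2' where
    "spec_step c1 s2 m2 f ds os2 c2' s2' m2' f2'" by (auto simp: spec_step_Skip)
  with Seq.IH Seq.prems(2-) show ?case by simp
next
  case (IfStep b c1 c2 s1 m1 f)
  have run2: "os2 = [OBranch (beval b s2)] \<and> s2' = s2 \<and> m2' = m2"
    using IfStep.prems(1) by (auto elim: spec_step_IfE)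
  moreover have "beval b s1 = beval b s2"
    using IfStep.prems(2-4,7) run2 beval_fiB_flagged by auto
  ultimately show ?case using low_equiv_if_pub_equiv IfStep.prems(3,5) by simp
next
  case (IfForce b c1 c2 s1 m1 f)
  have run2: "os2 = [OBranch (beval b s2)] \<and> s2' = s2 \<and> m2' = m2"
    using IfForce.prems(1) by (auto elim: spec_step_IfE)
  moreover have "beval b s1 = beval b s2"
    using IfForce.prems(2-4,7) run2 beval_fiB_flagged by auto
  ultimately show ?case using low_equiv_if_pub_equiv IfForce.prems(3,5) by simp
next
  case (Read ie s1 m1 a x f)
  show ?case
    by (rule spec_step_noninterference_read
      [OF spec_step.Read[where ie=ie and s=s1 and m=m1 and a=a, OF Read.hyps] Read.prems])
next
  case (ReadLoad f ie s1 m1 a j a' x)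
  show ?case
    by (rule spec_step_noninterference_read
      [OF spec_step.ReadLoad[where ie=ie and s=s1 and m=m1 and a=a, OF ReadLoad.hyps] ReadLoad.prems])
next
  case (Write ie s1 m1 a e f)
  show ?case
    by (rule spec_step_noninterference_write
      [OF spec_step.Write[where ie=ie and s=s1 and m=m1 and a=a, OF Write.hyps] Write.prems])
next
  case (WriteStore f ie s1 m1 a j a' e)
  show ?case
    by (rule spec_step_noninterference_write
      [OF spec_step.WriteStore[where ie=ie and s=s1 and m=m1 and a=a, OF WriteStore.hyps] WriteStore.prems])
qed (auto simp: spec_step_Skip low_equiv_if_pub_equiv dest!: spec_step_Seq_cases elim: spec_step_WhileE)

section \<open>Lockstep of two speculative runs\<close>

lemma pub_equiv_if_low_equiv: "low_equiv P PA s1 m1 s2 m2 \<Longrightarrow> s1 bvar = s2 bvar \<Longrightarrow> pub_equiv P s1 s2"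
  unfolding low_equiv_def pub_equiv_def by metis

lemma prefix_same_length: "prefix xs ys \<or> prefix ys xs \<Longrightarrow> length xs = length ys \<Longrightarrow> xs = ys"
  by (auto simp: prefix_def)

text \<open>The phases of a pair of speculative runs: both still on the sequential path with the
  flag clear, both misspeculating with the flag raised, or both just past a forced branch
  and about to raise the flag.\<close>

definition spec_phase :: "com \<Rightarrow> sstate \<Rightarrow> astate \<Rightarrow> bool \<Rightarrow> sstate \<Rightarrow> astate \<Rightarrow> bool" where
  "spec_phase C s1 m1 f s2 m2 \<longleftrightarrow>
    (\<not> f \<and> s1 bvar = 0 \<and> seq_obs_eqv C s1 m1 C s2 m2 \<and> seq_flag_clear C s1 m1 \<and> seq_flag_clear C s2 m2) \<or>
    s1 bvar = 1 \<or> (flag_pending C s1 \<and> flag_pending C s2)"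

definition spec_rel ::
    "(vname \<Rightarrow> bool) \<Rightarrow> (aname \<Rightarrow> bool) \<Rightarrow> com \<Rightarrow> sstate \<Rightarrow> astate \<Rightarrow> bool \<Rightarrow> sstate \<Rightarrow> astate \<Rightarrow> bool \<Rightarrow> bool"
  where
  "spec_rel P PA C s1 m1 f1 s2 m2 f2 \<longleftrightarrow>
    fislh_residual P PA C \<and> f1 = f2 \<and> (\<forall>a. 0 < length (m1 a)) \<and>
    s1 bvar = s2 bvar \<and> low_equiv P PA s1 m1 s2 m2 \<and> spec_phase C s1 m1 f1 s2 m2"

lemma spec_phase_step_sequential:
  assumes st1: "spec_step C s1 m1 f ds os1 C1 s1' m1' f1'"
    and st2: "spec_step C s2 m2 f ds os2 C2 s2' m2' f2'"
    and res: "fislh_residual P PA C" and "\<forall>a. 0 < length (m1 a)"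
    and low: "low_equiv P PA s1 m1 s2 m2" and "s1 bvar = s2 bvar"
    and "\<not> f" "s1 bvar = 0" and eqv: "seq_obs_eqv C s1 m1 C s2 m2"
    and clear: "seq_flag_clear C s1 m1" "seq_flag_clear C s2 m2"
  shows "os1 = os2 \<and> s1' bvar = s2' bvar \<and> low_equiv P PA s1' m1' s2' m2' \<and>
    spec_phase C1 s1' m1' f1' s2' m2'"
proof -
  have same_length: "length os1 = length os2"
    using spec_step_dirs[OF st1] spec_step_dirs[OF st2] by simp
  show ?thesis
  proof (cases "ds = [DForce]")
    case True
    with spec_step_forced[OF st1] spec_step_forced[OF st2] obtain D1 D2 where
      "seq_step C s1 m1 os1 D1 s1 m1" "seq_step C s2 m2 os2 D2 s2 m2"
      and unchanged: "s1' = s1" "m1' = m1" "s2' = s2" "m2' = m2" by blast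
    then have "prefix os1 os2 \<or> prefix os2 os1"
      using eqv unfolding seq_obs_eqv_def by (blast intro: seq_step_seq_steps)
    then have "os1 = os2" using same_length by (rule prefix_same_length)
    moreover have "C1 = C2" using spec_step_cmd_det[OF st1] st2 \<open>os1 = os2\<close> by blast
    moreover have "flag_pending C1 s1'" "flag_pending C2 s2'"
      using forced_step_flag_pending[OF res] st1 st2 True by blast+
    ultimately show ?thesis using unchanged low assms(6) by (simp add: spec_phase_def)
  next
    case False
    have seq1: "seq_step C s1 m1 os1 C1 s1' m1'" and seq2: "seq_step C s2 m2 os2 C2 s2' m2'"
      using spec_step_unforced st1 st2 False \<open>\<not> f\<close> by blast+
    then have "prefix os1 os2 \<or> prefix os2 os1"
      using eqv unfolding seq_obs_eqv_def by (blast intro: seq_step_seq_steps)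
    then have "os1 = os2" using same_length by (rule prefix_same_length)
    moreover have "C1 = C2" using spec_step_cmd_det[OF st1] st2 \<open>os1 = os2\<close> by blast
    moreover have "low_equiv P PA s1' m1' s2' m2'"
      using spec_step_noninterference[OF st1 st2 fislh_residual_safe[OF res]
          pub_equiv_if_low_equiv[OF low assms(6)]] low assms(4,6,7) \<open>os1 = os2\<close>
      by (simp add: low_equiv_def)
    moreover have "seq_flag_clear C1 s1' m1' \<and> s1' bvar = 0" "seq_flag_clear C1 s2' m2' \<and> s2' bvar = 0"
      using seq_flag_clear_step clear seq1 seq2 \<open>C1 = C2\<close> by blast+
    moreover have "seq_obs_eqv C1 s1' m1' C1 s2' m2'"
      using seq_obs_eqv_step[OF eqv seq1] seq2 \<open>C1 = C2\<close> \<open>os1 = os2\<close> by blast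
    moreover have "\<not> f1'" using spec_step_flag[OF st1] False \<open>\<not> f\<close> by simp
    ultimately show ?thesis by (simp add: spec_phase_def)
  qed
qed

lemma spec_phase_step_flagged:
  assumes st1: "spec_step C s1 m1 f ds os1 C1 s1' m1' f1'"
    and st2: "spec_step C s2 m2 f ds os2 C2 s2' m2' f2'"
    and res: "fislh_residual P PA C" and "\<forall>a. 0 < length (m1 a)"
    and low: "low_equiv P PA s1 m1 s2 m2" and "s1 bvar = 1" "s2 bvar = 1"
  shows "os1 = os2 \<and> s1' bvar = s2' bvar \<and> low_equiv P PA s1' m1' s2' m2' \<and>
    spec_phase C1 s1' m1' f1' s2' m2'"
proof -
  have safe: "fislh_safe P PA C" using res by (rule fislh_residual_safe)
  have "s1' bvar = 1" "s2' bvar = 1"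
    using spec_step_flag_set[OF st1 safe] spec_step_flag_set[OF st2 safe] assms(6,7) by blast+
  moreover have "os1 = os2 \<and> low_equiv P PA s1' m1' s2' m2'"
    using spec_step_noninterference[OF st1 st2 safe] low pub_equiv_if_low_equiv assms(4,6,7)
    by (simp add: low_equiv_def)
  ultimately show ?thesis by (simp add: spec_phase_def)
qed

lemma spec_phase_step_pending:
  assumes st1: "spec_step C s1 m1 f ds os1 C1 s1' m1' f1'"
    and st2: "spec_step C s2 m2 f ds os2 C2 s2' m2' f2'"
    and low: "low_equiv P PA s1 m1 s2 m2" and "s1 bvar = s2 bvar"
    and pending: "flag_pending C s1" "flag_pending C s2"
  shows "os1 = os2 \<and> s1' bvar = s2' bvar \<and> low_equiv P PA s1' m1' s2' m2' \<and>
    spec_phase C1 s1' m1' f1' s2' m2'"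
proof -
  note run1 = spec_step_flag_pending[OF st1 pending(1)]
  note run2 = spec_step_flag_pending[OF st2 pending(2)]
  have "C1 = C2" using spec_step_cmd_det[OF st1] st2 run1 run2 by simp
  show ?thesis
  proof (cases "head_is_asgn C")
    case True
    with run1 run2 low show ?thesis by (simp add: spec_phase_def low_equiv_def)
  next
    case False
    with run1 run2 low assms(4) \<open>C1 = C2\<close> show ?thesis by (simp add: spec_phase_def)
  qed
qed

lemma spec_rel_step:
  assumes rel: "spec_rel P PA C s1 m1 f1 s2 m2 f2"
    and st1: "spec_step C s1 m1 f1 ds os1 C1 s1' m1' f1'"
    and st2: "spec_step C s2 m2 f2 ds os2 C2 s2' m2' f2'"
  shows "os1 = os2 \<and> C1 = C2 \<and> spec_rel P PA C1 s1' m1' f1' s2' m2' f2'"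
proof -
  from rel have res: "fislh_residual P PA C" and "f1 = f2" and len: "\<forall>a. 0 < length (m1 a)"
    and low: "low_equiv P PA s1 m1 s2 m2" and "s1 bvar = s2 bvar"
    and phase: "spec_phase C s1 m1 f1 s2 m2"
    unfolding spec_rel_def by blast+
  note st2' = st2[folded \<open>f1 = f2\<close>]
  from phase consider
      (sequential) "\<not> f1 \<and> s1 bvar = 0 \<and> seq_obs_eqv C s1 m1 C s2 m2 \<and>
        seq_flag_clear C s1 m1 \<and> seq_flag_clear C s2 m2"
    | (flagged) "s1 bvar = 1"
    | (pending) "flag_pending C s1 \<and> flag_pending C s2"
    unfolding spec_phase_def by blast
  then have next_phase: "os1 = os2 \<and> s1' bvar = s2' bvar \<and> low_equiv P PA s1' m1' s2' m2' \<and>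
      spec_phase C1 s1' m1' f1' s2' m2'"
  proof cases
    case sequential
    then show ?thesis
      using spec_phase_step_sequential[OF st1 st2' res len low] \<open>s1 bvar = s2 bvar\<close> by blast
  next
    case flagged
    then show ?thesis
      using spec_phase_step_flagged[OF st1 st2' res len low] \<open>s1 bvar = s2 bvar\<close> by simp
  next
    case pending
    then show ?thesis using spec_phase_step_pending[OF st1 st2' low] \<open>s1 bvar = s2 bvar\<close> by blast
  qed
  then have "C1 = C2" using spec_step_cmd_det[OF st1] st2' by blast
  moreover have "fislh_residual P PA C1" using fislh_residual_step[OF res st1] .
  moreover have "f1' = f2'" using spec_step_flag[OF st1] spec_step_flag[OF st2] \<open>f1 = f2\<close> by simp
  moreover have "\<forall>a. 0 < length (m1' a)" using spec_step_array_length[OF st1] len by simp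
  ultimately show ?thesis using next_phase unfolding spec_rel_def by blast
qed

lemma spec_rel_steps_obs_eq:
  "spec_steps C s1 m1 f1 ds os1 C1 s1' m1' f1' \<Longrightarrow> spec_rel P PA C s1 m1 f1 s2 m2 f2 \<Longrightarrow>
    spec_steps C s2 m2 f2 ds os2 C2 s2' m2' f2' \<Longrightarrow> os1 = os2"
proof (induction arbitrary: s2 m2 f2 os2 C2 s2' m2' f2' rule: spec_steps.induct)
  case (refl C s1 m1 f1)
  then show ?case using spec_steps_length by fastforce
next
  case (step C s1 m1 f1 ds1 os1 C1 s1' m1' f1' ds os C' s1'' m1'' f1'')
  note first = step.hyps(1) and rest = step.hyps(2) and IH = step.IH and rel = step.prems(1)
  from step.prems(2) show ?case
  proof (cases rule: spec_steps.cases)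
    case refl
    then show ?thesis using spec_step_dirs[OF first] spec_steps_length[OF rest] by auto
  next
    case (step ds21 os21 C21 s21 m21 f21 ds22 os22)
    have "ds1 = ds21" "ds = ds22"
      using spec_step_dirs_append[OF first step(3)] step(1) by auto
    then have "os1 = os21 \<and> C1 = C21 \<and> spec_rel P PA C1 s1' m1' f1' s21 m21 f21"
      using spec_rel_step[OF rel first] step(3) by blast
    with IH step(2,4) \<open>ds = ds22\<close> show ?thesis by blast
  qed
qed

theorem theorem3p3:
  fixes P :: "vname \<Rightarrow> bool" and PA :: "aname \<Rightarrow> bool" and c :: com
    and s1 s2 :: sstate and m1 m2 :: astate
  assumes "bvar \<notin> used_vars c" and "s1 bvar = 0" and "s2 bvar = 0"
    and "\<forall>a. length (m1 a) > 0" and "\<forall>a. length (m2 a) > 0"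
    and "well_typed P PA True c" and "pub_equiv P s1 s2" and "apub_equiv PA m1 m2"
    and "seq_obs_eqv c s1 m1 c s2 m2"
  shows "spec_obs_eqv (fislh P c) s1 m1 False (fislh P c) s2 m2 False"
proof -
  have "spec_rel P PA (fislh P c) s1 m1 False s2 m2 False"
    unfolding spec_rel_def spec_phase_def
    using well_typed_fislh_residual[OF assms(6,1)] seq_obs_eqv_fislh[OF assms(1-3,9)]
      seq_flag_clear_fislh[of c s1 P m1] seq_flag_clear_fislh[of c s2 P m2]
      low_equiv_if_pub_equiv[OF assms(7,8)] assms(1-4) by simp
  then show ?thesis unfolding spec_obs_eqv_def using spec_rel_steps_obs_eq by blast
qed

end
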